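(* Let $G$ be a $(C_4,\text{diamond})$-free graph and let $AB$ and $A'B'$ be two edges of $F_k(G)$ in the same ladder class. Then $A\triangle B=A'\triangle B'$.
   Context: $F_k(G)$ is the graph on the $k$-subsets of $V(G)$ with $A,B$ adjacent iff $A\triangle B$ is an edge of $G$. A diamond is $K_4$ minus an edge; $(C_4,\text{diamond})$-free means no induced $4$-cycle and no induced diamond. A ladder is a graph isomorphic to $K_2\square P_m$ (Cartesian product of an edge with vertices $x,y$ and a path $P_m$ with $m\ge1$ edges and vertices $v_1,\dots,v_{m+1}$); for $m\ge2$ its rungs are the edges $(x,v_i)(y,v_i)$, and for $m=1$ the rungs may be either of the two pairs of disjoint edges of the $4$-cycle. Two edges $e,f$ of a graph $F$ are connected by a ladder if some induced subgraph of $F$ isomorphic to a ladder has $e$ and $f$ as rungs. The ladder classes of $F$ are the equivalence classes of the (smallest equivalence relation containing the) relation "connected by a ladder" on $E(F)$. *)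

theory Defs
  imports Main
begin

definition simple_graph :: "'a set \<Rightarrow> 'a set set \<Rightarrow> bool" where
  "simple_graph V E \<longleftrightarrow> (\<forall>e\<in>E. \<exists>u v. u \<in> V \<and> v \<in> V \<and> u \<noteq> v \<and> e = {u, v})"

definition adj :: "'a set set \<Rightarrow> 'a \<Rightarrow> 'a \<Rightarrow> bool" where
  "adj E u v \<longleftrightarrow> {u, v} \<in> E"

definition symdiff :: "'a set \<Rightarrow> 'a set \<Rightarrow> 'a set" where
  "symdiff A B = (A - B) \<union> (B - A)"

definition C4_free :: "'a set \<Rightarrow> 'a set set \<Rightarrow> bool" where
  "C4_free V E \<longleftrightarrow> \<not> (\<exists>a\<in>V. \<exists>b\<in>V. \<exists>c\<in>V. \<exists>d\<in>V. distinct [a, b, c, d] \<and>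
      adj E a b \<and> adj E b c \<and> adj E c d \<and> adj E d a \<and> \<not> adj E a c \<and> \<not> adj E b d)"

definition diamond_free :: "'a set \<Rightarrow> 'a set set \<Rightarrow> bool" where
  "diamond_free V E \<longleftrightarrow> \<not> (\<exists>a\<in>V. \<exists>b\<in>V. \<exists>c\<in>V. \<exists>d\<in>V. distinct [a, b, c, d] \<and>
      adj E a b \<and> adj E b c \<and> adj E c d \<and> adj E d a \<and> adj E b d \<and> \<not> adj E a c)"

definition token_vertices :: "'a set \<Rightarrow> nat \<Rightarrow> 'a set set" where
  "token_vertices V k = {A. A \<subseteq> V \<and> finite A \<and> card A = k}"

definition token_edges :: "'a set \<Rightarrow> 'a set set \<Rightarrow> nat \<Rightarrow> 'a set set set" where
  "token_edges V E k = {{A, B} | A B. A \<in> token_vertices V k \<and> B \<in> token_vertices V k \<and> symdiff A B \<in> E}"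

text \<open>Adjacency in the ladder K2 \<box> P_m, vertices (i,j) with i \<in> {0,1}, j \<in> {0..m}.\<close>
definition ladder_verts :: "nat \<Rightarrow> (nat \<times> nat) set" where
  "ladder_verts m = {0, 1} \<times> {0..m}"

definition ladder_adj :: "nat \<times> nat \<Rightarrow> nat \<times> nat \<Rightarrow> bool" where
  "ladder_adj p q \<longleftrightarrow> (fst p = fst q \<and> (snd q = snd p + 1 \<or> snd p = snd q + 1))
                      \<or> (snd p = snd q \<and> fst p \<noteq> fst q)"

definition induced_ladder :: "'b set \<Rightarrow> 'b set set \<Rightarrow> nat \<Rightarrow> (nat \<times> nat \<Rightarrow> 'b) \<Rightarrow> bool" where
  "induced_ladder W F m phi \<longleftrightarrow> m \<ge> 1 \<and> inj_on phi (ladder_verts m) \<and>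
     phi ` ladder_verts m \<subseteq> W \<and>
     (\<forall>p\<in>ladder_verts m. \<forall>q\<in>ladder_verts m. ({phi p, phi q} \<in> F \<longleftrightarrow> ladder_adj p q))"

text \<open>Rungs: for every m the edges phi(0,i)phi(1,i); for m = 1 alternatively the other pair of
  disjoint edges of the 4-cycle.\<close>
definition connected_by_ladder :: "'b set \<Rightarrow> 'b set set \<Rightarrow> 'b set \<Rightarrow> 'b set \<Rightarrow> bool" where
  "connected_by_ladder W F e f \<longleftrightarrow> (\<exists>m phi. induced_ladder W F m phi \<and>
     ((\<exists>i\<le>m. \<exists>j\<le>m. e = {phi (0, i), phi (1, i)} \<and> f = {phi (0, j), phi (1, j)}) \<or>
      (m = 1 \<and> (\<exists>i\<le>1. \<exists>j\<le>1. e = {phi (i, 0), phi (i, 1)} \<and> f = {phi (j, 0), phi (j, 1)}))))"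

definition ladder_rel :: "'b set \<Rightarrow> 'b set set \<Rightarrow> ('b set \<times> 'b set) set" where
  "ladder_rel W F = {(e, f). e \<in> F \<and> f \<in> F \<and> connected_by_ladder W F e f}"

definition same_ladder_class :: "'b set \<Rightarrow> 'b set set \<Rightarrow> 'b set \<Rightarrow> 'b set \<Rightarrow> bool" where
  "same_ladder_class W F e f \<longleftrightarrow> e \<in> F \<and> f \<in> F \<and>
     (e, f) \<in> (ladder_rel W F \<union> (ladder_rel W F)\<inverse>)\<^sup>*"

end

theory Submission
  imports Defs
begin

text \<open>
  Label each edge AB of F_k(G) by the edge A \<triangle> B of G. Around a 4-cycle A B C D of F_k(G)
  the four labels have vanishing symmetric difference, and the diagonals A \<triangle> C and B \<triangle> D
  are symmetric differences of consecutive labels. If the cycle is induced and two consecutive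
  labels share a vertex, their outer endpoints p, r are non-adjacent, and the other two labels
  must then form a second path p-s-r; two distinct common neighbours of non-adjacent vertices
  span an induced C4 or diamond. Otherwise opposite labels coincide. Hence opposite sides of
  every square of an induced ladder carry the same label, all rungs of a ladder share one label,
  and the label is constant on ladder classes. Neither finiteness of V nor the value of k plays
  any role.
\<close>

lemma simple_graph_edgeE:
  assumes "simple_graph V E" "e \<in> E"
  obtains u v where "e = {u, v}" "u \<in> V" "v \<in> V" "u \<noteq> v"
  using assms unfolding simple_graph_def by blast

lemma simple_graph_edge_subset:
  assumes "simple_graph V E" "e \<in> E"
  shows "e \<subseteq> V"
  using assms by (elim simple_graph_edgeE) auto

lemma simple_graph_edge_endpoints_neq:
  assumes "simple_graph V E" "{p, q} \<in> E"
  shows "p \<noteq> q"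
  using assms by (elim simple_graph_edgeE) auto

lemma simple_graph_edge_through:
  assumes "simple_graph V E" "e \<in> E" "p \<in> e"
  obtains s where "e = {p, s}" "s \<noteq> p"
proof -
  obtain u v where uv: "e = {u, v}" "u \<noteq> v"
    using assms(1,2) by (elim simple_graph_edgeE)
  then consider "p = u" | "p = v" using assms(3) by blast
  then show thesis using that uv by cases (auto simp: insert_commute)
qed

lemma simple_graph_edge_subset_eq:
  assumes "simple_graph V E" "e \<in> E" "f \<in> E" "e \<subseteq> f"
  shows "e = f"
proof -
  obtain u v w z where "e = {u, v}" "u \<noteq> v" "f = {w, z}"
    using assms(1-3) by (metis simple_graph_edgeE)
  then show ?thesis using \<open>e \<subseteq> f\<close> by auto
qed

lemma nonadjacent_common_neighbour_unique:
  assumes sg: "simple_graph V E" and c4: "C4_free V E" and dm: "diamond_free V E"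
    and "{p, r} \<notin> E" "p \<noteq> r"
    and "{p, q} \<in> E" "{q, r} \<in> E" "{p, s} \<in> E" "{s, r} \<in> E"
  shows "q = s"
proof (rule ccontr)
  assume "q \<noteq> s"
  then have distinct: "distinct [p, q, r, s]"
    using assms simple_graph_edge_endpoints_neq[OF sg] by auto
  have in_V: "p \<in> V" "q \<in> V" "r \<in> V" "s \<in> V"
    using assms simple_graph_edge_subset[OF sg] by auto
  have cycle: "adj E p q" "adj E q r" "adj E r s" "adj E s p" "\<not> adj E p r"
    using assms unfolding adj_def by (simp_all add: insert_commute)
  show False
  proof (cases "adj E q s")
    case True
    have "\<exists>a\<in>V. \<exists>b\<in>V. \<exists>c\<in>V. \<exists>d\<in>V. distinct [a, b, c, d] \<and>
        adj E a b \<and> adj E b c \<and> adj E c d \<and> adj E d a \<and> adj E b d \<and> \<not> adj E a c"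
      using in_V distinct cycle True
      by (intro bexI[of _ p] bexI[of _ q] bexI[of _ r] bexI[of _ s]) simp_all
    then show False using dm unfolding diamond_free_def by contradiction
  next
    case False
    have "\<exists>a\<in>V. \<exists>b\<in>V. \<exists>c\<in>V. \<exists>d\<in>V. distinct [a, b, c, d] \<and>
        adj E a b \<and> adj E b c \<and> adj E c d \<and> adj E d a \<and> \<not> adj E a c \<and> \<not> adj E b d"
      using in_V distinct cycle False
      by (intro bexI[of _ p] bexI[of _ q] bexI[of _ r] bexI[of _ s]) simp_all
    then show False using c4 unfolding C4_free_def by contradiction
  qed
qed

lemma symdiff_commute: "symdiff A B = symdiff B A"
  by (auto simp: symdiff_def)

lemma symdiff_symdiff_cancel: "symdiff (symdiff A B) (symdiff B C) = symdiff A C"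
  by (auto simp: symdiff_def)

lemma symdiff_eq_empty_iff: "symdiff A B = {} \<longleftrightarrow> A = B"
  by (auto simp: symdiff_def)

lemma meeting_edges_unique_by_symdiff:
  assumes sg: "simple_graph V E" and c4: "C4_free V E" and dm: "diamond_free V E"
    and e: "e \<in> E" and f: "f \<in> E" and "e \<noteq> f" "e \<inter> f \<noteq> {}"
    and nonedge: "symdiff e f \<notin> E"
    and g: "g \<in> E" and h: "h \<in> E" and gh: "symdiff g h = symdiff e f"
  shows "{g, h} = {e, f}"
proof -
  obtain q where q: "q \<in> e" "q \<in> f" using \<open>e \<inter> f \<noteq> {}\<close> by blast
  obtain p where ep: "e = {q, p}" "p \<noteq> q" using simple_graph_edge_through[OF sg e q(1)] .
  obtain r where fr: "f = {q, r}" "r \<noteq> q" using simple_graph_edge_through[OF sg f q(2)] .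
  have "p \<noteq> r" using \<open>e \<noteq> f\<close> ep fr by blast
  have ef: "symdiff e f = {p, r}" using ep fr \<open>p \<noteq> r\<close> unfolding symdiff_def by auto
  have edges: "{p, q} \<in> E" "{q, r} \<in> E" using e f ep fr by (simp_all add: insert_commute)
  have through_p: "{g', h'} = {{p, q}, {q, r}}"
    if g': "g' \<in> E" and h': "h' \<in> E" and sd: "symdiff g' h' = {p, r}" and "p \<in> g'" for g' h'
  proof -
    obtain s where gs: "g' = {p, s}" "s \<noteq> p"
      using simple_graph_edge_through[OF sg g' \<open>p \<in> g'\<close>] .
    have "s \<noteq> r" using gs g' nonedge ef by auto
    then have "s \<in> h'" using gs sd \<open>p \<noteq> r\<close> unfolding symdiff_def by blast
    then obtain t where ht: "h' = {s, t}" "t \<noteq> s"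
      using simple_graph_edge_through[OF sg h'] by blast
    have "t = r" using gs ht sd \<open>p \<noteq> r\<close> unfolding symdiff_def by blast
    then have "{p, s} \<in> E" "{s, r} \<in> E" using g' h' gs ht by simp_all
    then have "s = q"
      using nonadjacent_common_neighbour_unique[OF sg c4 dm _ \<open>p \<noteq> r\<close> edges] nonedge ef
      by metis
    then show ?thesis using gs ht \<open>t = r\<close> by simp
  qed
  have sd: "symdiff g h = {p, r}" using gh ef by simp
  then have "p \<in> g \<or> p \<in> h" unfolding symdiff_def by blast
  then have "{g, h} = {{p, q}, {q, r}}"
  proof
    assume "p \<in> g"
    then show ?thesis by (rule through_p[OF g h sd])
  next
    assume "p \<in> h"
    then have "{h, g} = {{p, q}, {q, r}}"
      using through_p[OF h g] sd symdiff_commute[of h g] by simp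
    then show ?thesis by (simp add: insert_commute)
  qed
  then show ?thesis using ep fr by (simp add: insert_commute)
qed

lemma four_cycle_labels_opposite_eq:
  assumes sg: "simple_graph V E" and c4: "C4_free V E" and dm: "diamond_free V E"
    and edges: "e1 \<in> E" "e2 \<in> E" "e3 \<in> E" "e4 \<in> E"
    and closed: "symdiff e1 e2 = symdiff e3 e4"
    and diagonals: "symdiff e1 e2 \<notin> E" "symdiff e2 e3 \<notin> E"
    and "e1 \<noteq> e2" "e4 \<noteq> e1"
  shows "e1 = e3"
proof -
  have closed': "symdiff e2 e3 = symdiff e4 e1"
    using closed unfolding symdiff_def set_eq_iff by blast
  consider "e1 \<inter> e2 \<noteq> {}" | "e4 \<inter> e1 \<noteq> {}" | "e1 \<inter> e2 = {}" "e4 \<inter> e1 = {}"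
    by blast
  then show ?thesis
  proof cases
    case 1
    have "{e3, e4} = {e1, e2}"
      by (rule meeting_edges_unique_by_symdiff[OF sg c4 dm edges(1,2) \<open>e1 \<noteq> e2\<close> 1
            diagonals(1) edges(3,4) closed[symmetric]])
    then show ?thesis using \<open>e4 \<noteq> e1\<close> by (auto simp: doubleton_eq_iff)
  next
    case 2
    have "symdiff e4 e1 \<notin> E" using diagonals(2) closed' by simp
    then have "{e2, e3} = {e4, e1}"
      by (rule meeting_edges_unique_by_symdiff[OF sg c4 dm edges(4,1) \<open>e4 \<noteq> e1\<close> 2 _
            edges(2,3) closed'])
    then show ?thesis using \<open>e1 \<noteq> e2\<close> by (auto simp: doubleton_eq_iff)
  next
    case 3
    then have "e1 \<subseteq> e3" using closed unfolding symdiff_def by blast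
    then show ?thesis by (rule simple_graph_edge_subset_eq[OF sg edges(1,3)])
  qed
qed

lemma four_cycle_parallel_symdiff_eq:
  assumes sg: "simple_graph V E" and c4: "C4_free V E" and dm: "diamond_free V E"
    and edges: "symdiff A B \<in> E" "symdiff B C \<in> E" "symdiff C D \<in> E" "symdiff D A \<in> E"
    and diagonals: "symdiff A C \<notin> E" "symdiff B D \<notin> E"
    and "A \<noteq> C" "B \<noteq> D"
  shows "symdiff A B = symdiff D C"
proof -
  have AC: "symdiff (symdiff A B) (symdiff B C) = symdiff A C"
    and BD: "symdiff (symdiff B C) (symdiff C D) = symdiff B D"
    and DB: "symdiff (symdiff D A) (symdiff A B) = symdiff D B"
    by (rule symdiff_symdiff_cancel)+
  have closed: "symdiff (symdiff A B) (symdiff B C) = symdiff (symdiff C D) (symdiff D A)"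
    unfolding AC symdiff_symdiff_cancel by (rule symdiff_commute)
  have "symdiff A B \<noteq> symdiff B C"
    using AC \<open>A \<noteq> C\<close> by (metis symdiff_eq_empty_iff)
  moreover have "symdiff D A \<noteq> symdiff A B"
    using DB \<open>B \<noteq> D\<close> by (metis symdiff_eq_empty_iff)
  ultimately have "symdiff A B = symdiff C D"
    using four_cycle_labels_opposite_eq[OF sg c4 dm edges closed] diagonals AC BD by simp
  then show ?thesis by (simp add: symdiff_commute)
qed

lemma token_edges_iff:
  assumes "X \<in> token_vertices V k" "Y \<in> token_vertices V k"
  shows "{X, Y} \<in> token_edges V E k \<longleftrightarrow> symdiff X Y \<in> E"
  using assms unfolding token_edges_def by (auto simp: doubleton_eq_iff symdiff_commute)

lemma induced_ladder_token_symdiff_iff: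
  assumes "induced_ladder (token_vertices V k) (token_edges V E k) m phi"
    and "p \<in> ladder_verts m" "q \<in> ladder_verts m"
  shows "symdiff (phi p) (phi q) \<in> E \<longleftrightarrow> ladder_adj p q"
proof -
  have "phi p \<in> token_vertices V k" "phi q \<in> token_vertices V k"
    using assms unfolding induced_ladder_def by auto
  moreover have "{phi p, phi q} \<in> token_edges V E k \<longleftrightarrow> ladder_adj p q"
    using assms unfolding induced_ladder_def by blast
  ultimately show ?thesis by (simp add: token_edges_iff)
qed

lemma induced_ladder_token_square:
  assumes sg: "simple_graph V E" and c4: "C4_free V E" and dm: "diamond_free V E"
    and L: "induced_ladder (token_vertices V k) (token_edges V E k) m phi" and "i < m"
  shows "symdiff (phi (0, i)) (phi (1, i)) = symdiff (phi (0, Suc i)) (phi (1, Suc i))"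
    and "symdiff (phi (0, i)) (phi (0, Suc i)) = symdiff (phi (1, i)) (phi (1, Suc i))"
proof -
  have inj: "inj_on phi (ladder_verts m)" using L unfolding induced_ladder_def by blast
  have square: "symdiff (phi a) (phi b) = symdiff (phi d) (phi c)"
    if "a \<in> ladder_verts m" "b \<in> ladder_verts m" "c \<in> ladder_verts m" "d \<in> ladder_verts m"
      and "ladder_adj a b" "ladder_adj b c" "ladder_adj c d" "ladder_adj d a"
      and "\<not> ladder_adj a c" "\<not> ladder_adj b d" "a \<noteq> c" "b \<noteq> d" for a b c d
    by (rule four_cycle_parallel_symdiff_eq[OF sg c4 dm])
      (use that induced_ladder_token_symdiff_iff[OF L] inj_on_contraD[OF inj] in auto)
  have verts: "(0, i) \<in> ladder_verts m" "(1, i) \<in> ladder_verts m"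
    "(0, Suc i) \<in> ladder_verts m" "(1, Suc i) \<in> ladder_verts m"
    using \<open>i < m\<close> by (auto simp: ladder_verts_def)
  show "symdiff (phi (0, i)) (phi (1, i)) = symdiff (phi (0, Suc i)) (phi (1, Suc i))"
    using square[of "(0, i)" "(1, i)" "(1, Suc i)" "(0, Suc i)"] verts
    by (simp add: ladder_adj_def)
  show "symdiff (phi (0, i)) (phi (0, Suc i)) = symdiff (phi (1, i)) (phi (1, Suc i))"
    using square[of "(0, i)" "(0, Suc i)" "(1, Suc i)" "(1, i)"] verts
    by (simp add: ladder_adj_def)
qed

lemma induced_ladder_token_rung_symdiff:
  assumes sg: "simple_graph V E" and c4: "C4_free V E" and dm: "diamond_free V E"
    and L: "induced_ladder (token_vertices V k) (token_edges V E k) m phi"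
  shows "i \<le> m \<Longrightarrow> symdiff (phi (0, i)) (phi (1, i)) = symdiff (phi (0, 0)) (phi (1, 0))"
proof (induction i)
  case 0
  show ?case by simp
next
  case (Suc i)
  then show ?case using induced_ladder_token_square(1)[OF sg c4 dm L, of i] by simp
qed

definition edge_label :: "'a set set \<Rightarrow> 'a set" where
  "edge_label e = \<Union>e - \<Inter>e"

lemma edge_label_doubleton [simp]: "edge_label {X, Y} = symdiff X Y"
  by (auto simp: edge_label_def symdiff_def)

lemma connected_by_ladder_token_edge_label:
  assumes sg: "simple_graph V E" and c4: "C4_free V E" and dm: "diamond_free V E"
    and "connected_by_ladder (token_vertices V k) (token_edges V E k) e f"
  shows "edge_label e = edge_label f"
proof -
  obtain m phi where L: "induced_ladder (token_vertices V k) (token_edges V E k) m phi"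
    and rungs: "(\<exists>i\<le>m. \<exists>j\<le>m. e = {phi (0, i), phi (1, i)} \<and> f = {phi (0, j), phi (1, j)}) \<or>
      (m = 1 \<and> (\<exists>i\<le>1. \<exists>j\<le>1. e = {phi (i, 0), phi (i, 1)} \<and> f = {phi (j, 0), phi (j, 1)}))"
    using assms(4) unfolding connected_by_ladder_def by blast
  from rungs show ?thesis
  proof (elim disjE exE conjE)
    fix i j
    assume "i \<le> m" "j \<le> m" "e = {phi (0, i), phi (1, i)}" "f = {phi (0, j), phi (1, j)}"
    then show ?thesis
      using induced_ladder_token_rung_symdiff[OF sg c4 dm L \<open>i \<le> m\<close>]
        induced_ladder_token_rung_symdiff[OF sg c4 dm L \<open>j \<le> m\<close>]
      by simp
  next
    fix i j :: nat
    assume "m = 1" "i \<le> 1" "j \<le> 1"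
      and "e = {phi (i, 0), phi (i, 1)}" "f = {phi (j, 0), phi (j, 1)}"
    moreover have "symdiff (phi (0, 0)) (phi (0, 1)) = symdiff (phi (1, 0)) (phi (1, 1))"
      using induced_ladder_token_square(2)[OF sg c4 dm L, of 0] \<open>m = 1\<close> by simp
    ultimately show ?thesis by (auto simp: le_Suc_eq)
  qed
qed

lemma rtrancl_symcl_invariant:
  assumes "(x, y) \<in> (R \<union> R\<inverse>)\<^sup>*" and "\<And>x y. (x, y) \<in> R \<Longrightarrow> f x = f y"
  shows "f x = f y"
  using assms(1) by induction (auto dest: assms(2))

theorem proposition23:
  fixes V :: "'a set" and E :: "'a set set" and k :: nat and A B A' B' :: "'a set"
  assumes "finite V" and "simple_graph V E"
    and "C4_free V E" and "diamond_free V E"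
    and "{A, B} \<in> token_edges V E k" and "{A', B'} \<in> token_edges V E k"
    and "same_ladder_class (token_vertices V k) (token_edges V E k) {A, B} {A', B'}"
  shows "symdiff A B = symdiff A' B'"
proof -
  let ?R = "ladder_rel (token_vertices V k) (token_edges V E k)"
  have "({A, B}, {A', B'}) \<in> (?R \<union> ?R\<inverse>)\<^sup>*"
    using assms(7) unfolding same_ladder_class_def by blast
  then have "edge_label {A, B} = edge_label {A', B'}"
  proof (rule rtrancl_symcl_invariant)
    show "edge_label e = edge_label f" if "(e, f) \<in> ?R" for e f
      using that connected_by_ladder_token_edge_label[OF assms(2-4)]
      unfolding ladder_rel_def by blast
  qed
  then show ?thesis by simp
qed

end
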